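(* Consider the multi-agent setting, the problems $\mathrm{FTOCP}^{(m)}_k(\hat N)$ and the CMC procedure described in the context, with all agents $m=1,\dots,M$ operating in closed loop under the CMC procedure. If at time $k=0$ the CMC procedure succeeds for every agent, then the CMC procedure succeeds for every agent at every time $k=1,2,3,\dots$ (recursive feasibility).
   Context: Setting. Let $\Delta t>0$, $\bar a>0$, $\bar v>0$, $\rho>0$, integers $M\ge 2$ and $N\ge1$, and $\tilde N:=\lceil \bar v/(\bar a\Delta t)\rceil$ with $\tilde N\le N-1$ ($\lceil r\rceil$ = smallest integer $\ge r$). Each agent $m=1,\dots,M$ has state $\mathbf{s}^{(m)}_k=(\mathbf{p}^{(m)}_k,\mathbf{v}^{(m)}_k)\in\mathbb{R}^3\times\mathbb{R}^3$ (position, velocity) and input $\mathbf{a}^{(m)}_k\in\mathbb{R}^3$, with exact, disturbance-free dynamics $\mathbf{s}_{k+1}=\mathbf{A}\mathbf{s}_k+\mathbf{B}\mathbf{a}_k$, where $\mathbf{A}=\begin{bmatrix}I_3&\Delta t I_3\\0&I_3\end{bmatrix}$, $\mathbf{B}=\begin{bmatrix}\tfrac{(\Delta t)^2}{2}I_3\\ \Delta t I_3\end{bmatrix}$; initial velocities satisfy $\|\mathbf{v}^{(m)}_0\|_2\le\bar v$. Each agent is a ball of radius $\rho$ centred at its position. Each agent $m$ has a position constraint set $\mathbb{S}^{(m)}\subseteq\mathbb{R}^3$ and a cost function $J^{(m)}$ of its nominal inputs and states; whenever an FTOCP below is feasible it is assumed to have an optimal solution (denoted by a star). All agents share a synchronized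 clock, measure all agents' states exactly, and do not communicate. Reference contingency plan. For a state $(\mathbf{p},\mathbf{v})$ let $n=\lceil\|\mathbf{v}\|_2/(\bar a\Delta t)\rceil$. The reference contingency trajectory starts at $(\mathbf{p},\mathbf{v})$ and applies the input $-\mathbf{v}/(n\Delta t)$ for steps $0,\dots,n-1$ and $\mathbf{0}$ afterwards (if $n=0$ the agent stays at $\mathbf{p}$). Denote by $\mathbf{r}^{(j)}_{i|k}$, $i=0,1,2,\dots$, the positions of the reference contingency trajectory computed from $\mathbf{s}^{(j)}_k$. Collision-avoidance constraint of agent $m$ w.r.t. agent $j\ne m$ at step $i$: with $d^{(j,m)}_{i|k}=\|\mathbf{r}^{(j)}_{i|k}-\mathbf{r}^{(m)}_{i|k}\|_2$, $\mathbf{g}^{(j,m)}_{i|k}=(\mathbf{r}^{(j)}_{i|k}-\mathbf{r}^{(m)}_{i|k})/d^{(j,m)}_{i|k}$ and $h^{(j,m)}_{i|k}=\mathbf{g}^{(j,m)\mathrm T}_{i|k}\mathbf{r}^{(m)}_{i|k}+\tfrac12 d^{(j,m)}_{i|k}-\rho$, a point $\mathbf{q}\in\mathbb{R}^3$ satisfies it iff $\mathbf{g}^{(j,m)\mathrm T}_{i|k}\mathbf{q}\le h^{(j,m)}_{i|k}$. (The FTOCP is well defined only when all these $d^{(j,m)}_{i|k}$ are nonzero.) $\mathrm{FTOCP}^{(m)}_k(\hat N)$, for an integer $\hat N\ge0$: minimize $J^{(m)}$ over $\mathbf{a}^{(m)}_{0|k},\dots,\mathbf{a}^{(m)}_{N-1|k}$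 subject to: nominal states $\mathbf{s}^{(m)}_{0|k}=\mathbf{s}^{(m)}_k$, $\mathbf{s}^{(m)}_{i+1|k}=\mathbf{A}\mathbf{s}^{(m)}_{i|k}+\mathbf{B}\mathbf{a}^{(m)}_{i|k}$; $\|\mathbf{a}^{(m)}_{i|k}\|_2\le\bar a$ for $i=0,\dots,N-1$; the position of $\mathbf{s}^{(m)}_{i|k}$ lies in $\mathbb{S}^{(m)}$ for $i=1,\dots,N$; contingency states $\tilde{\mathbf{s}}^{(m)}_{1|k}=\mathbf{s}^{(m)}_{1|k}$, and, writing $\mathbf{v}^{(m)}_{1|k}$ for the velocity of $\mathbf{s}^{(m)}_{1|k}$, contingency inputs $\tilde{\mathbf{a}}^{(m)}_{i|k}=-\mathbf{v}^{(m)}_{1|k}/(\hat N\Delta t)$ and $\tilde{\mathbf{s}}^{(m)}_{i+1|k}=\mathbf{A}\tilde{\mathbf{s}}^{(m)}_{i|k}+\mathbf{B}\tilde{\mathbf{a}}^{(m)}_{i|k}$ for $i=1,\dots,\hat N$, and $\tilde{\mathbf{s}}^{(m)}_{i|k}=\tilde{\mathbf{s}}^{(m)}_{\hat N+1|k}$ for $\hat N+1<i\le N$; the position of $\tilde{\mathbf{s}}^{(m)}_{i|k}$ lies in $\mathbb{S}^{(m)}$ for $i=2,\dots,\hat N+1$; and for every $j\ne m$ and every $i=1,\dots,N$ the position of $\tilde{\mathbf{s}}^{(m)}_{i|k}$ satisfies the collision-avoidance constraint of agent $m$ w.r.t. $j$ at step $i$. CMC procedure of agent $m$ at time $k$. Let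 $\tilde N^{(m)}_k=\lceil\|\mathbf{v}^{(m)}_k\|_2/(\bar a\Delta t)\rceil$. Call a solution valid if its $\mathbf{v}^{(m)\star}_{1|k}$ satisfies $\lceil\|\mathbf{v}^{(m)\star}_{1|k}\|_2/(\bar a\Delta t)\rceil=\hat N$. (a) If $\tilde N^{(m)}_k<\tilde N$, solve $\mathrm{FTOCP}^{(m)}_k(\tilde N^{(m)}_k+1)$; if it is feasible and its optimal solution is valid, apply $\mathbf{a}^{(m)\star}_{0|k}$ and stop. (b) Otherwise solve $\mathrm{FTOCP}^{(m)}_k(\tilde N^{(m)}_k)$ with the additional constraint $\|\mathbf{v}^{(m)}_{1|k}\|_2\le\bar a\tilde N^{(m)}_k\Delta t$; if it is feasible and its optimal solution is valid, apply $\mathbf{a}^{(m)\star}_{0|k}$ and stop. (c) Otherwise (this step exists only when $\tilde N^{(m)}_k\ge1$) solve $\mathrm{FTOCP}^{(m)}_k(\tilde N^{(m)}_k-1)$ with the additional constraint $\|\mathbf{v}^{(m)}_{1|k}\|_2\le\bar a(\tilde N^{(m)}_k-1)\Delta t$ and apply $\mathbf{a}^{(m)\star}_{0|k}$. The procedure succeeds at time $k$ if it applies an input, i.e. if step (a) or (b) produces a valid optimal solution or the FTOCP in step (c) is (well defined and) feasible. In closed loop, $\mathbf{s}^{(m)}_{k+1}=\mathbf{A}\mathbf{s}^{(m)}_k+\mathbf{B}\mathbf{a}^{(m)\star}_{0|k}$ for every agent. *)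

theory Defs
  imports "HOL-Analysis.Analysis"
begin

type_synonym vec = "real^3"
type_synonym state = "vec \<times> vec"   (* (position, velocity) *)

definition step :: "real \<Rightarrow> state \<Rightarrow> vec \<Rightarrow> state" where
  "step dt s a = (fst s + dt *\<^sub>R snd s + (dt^2 / 2) *\<^sub>R a, snd s + dt *\<^sub>R a)"

definition nsteps :: "real \<Rightarrow> real \<Rightarrow> vec \<Rightarrow> nat" where
  "nsteps abar dt v = nat \<lceil>norm v / (abar * dt)\<rceil>"

definition ref_input :: "real \<Rightarrow> real \<Rightarrow> state \<Rightarrow> nat \<Rightarrow> vec" where
  "ref_input abar dt s i =
     (let n = nsteps abar dt (snd s)
      in if i < n then - ((1 / (real n * dt)) *\<^sub>R snd s) else 0)"

fun ref_state :: "real \<Rightarrow> real \<Rightarrow> state \<Rightarrow> nat \<Rightarrow> state" where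
  "ref_state abar dt s 0 = s"
| "ref_state abar dt s (Suc i) = step dt (ref_state abar dt s i) (ref_input abar dt s i)"

definition ref_pos :: "real \<Rightarrow> real \<Rightarrow> state \<Rightarrow> nat \<Rightarrow> vec" where
  "ref_pos abar dt s i = fst (ref_state abar dt s i)"

text \<open>Collision-avoidance half-space of agent m (reference position rm) w.r.t. agent j
  (reference position rj): g^T q \<le> h.\<close>
definition ca_ok :: "real \<Rightarrow> vec \<Rightarrow> vec \<Rightarrow> vec \<Rightarrow> bool" where
  "ca_ok rho rj rm q =
     (let d = norm (rj - rm); g = (1 / d) *\<^sub>R (rj - rm); h = g \<bullet> rm + d / 2 - rho
      in g \<bullet> q \<le> h)"

text \<open>Nominal states s_{i|k} generated by the input list as (as ! i = a_{i|k}).\<close>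
fun nom_state :: "real \<Rightarrow> state \<Rightarrow> vec list \<Rightarrow> nat \<Rightarrow> state" where
  "nom_state dt s0 as 0 = s0"
| "nom_state dt s0 as (Suc i) = step dt (nom_state dt s0 as i) (as ! i)"

text \<open>Contingency state \<tilde>s_{i|k} for i \<ge> 1, starting at \<tilde>s_{1|k} = s1 = s_{1|k},
  with input -v1/(Nh dt) for Nh steps, then constant.\<close>
definition cont_state :: "real \<Rightarrow> nat \<Rightarrow> state \<Rightarrow> nat \<Rightarrow> state" where
  "cont_state dt Nh s1 i =
     ((\<lambda>s. step dt s (- ((1 / (real Nh * dt)) *\<^sub>R snd s1))) ^^ (min (i - 1) Nh)) s1"

text \<open>Constraints of FTOCP^(m)_k(Nh); st j = current state of agent j; vb = optional
  additional bound on the norm of v_{1|k}. Well-definedness (all d nonzero) is required.\<close>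
definition ftocp_constr ::
  "real \<Rightarrow> real \<Rightarrow> real \<Rightarrow> nat \<Rightarrow> nat \<Rightarrow> (nat \<Rightarrow> vec set) \<Rightarrow> (nat \<Rightarrow> state) \<Rightarrow> nat
   \<Rightarrow> nat \<Rightarrow> real option \<Rightarrow> vec list \<Rightarrow> bool" where
  "ftocp_constr dt abar rho M N S st m Nh vb as =
     (length as = N \<and>
      (\<forall>i<N. norm (as ! i) \<le> abar) \<and>
      (\<forall>i\<in>{1..N}. fst (nom_state dt (st m) as i) \<in> S m) \<and>
      (let s1 = nom_state dt (st m) as 1 in
        (\<forall>i\<in>{2..Nh+1}. fst (cont_state dt Nh s1 i) \<in> S m) \<and>
        (\<forall>j\<in>{1..M}. j \<noteq> m \<longrightarrow> (\<forall>i\<in>{1..N}.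
            ref_pos abar dt (st j) i \<noteq> ref_pos abar dt (st m) i \<and>
            ca_ok rho (ref_pos abar dt (st j) i) (ref_pos abar dt (st m) i)
                  (fst (cont_state dt Nh s1 i)))) \<and>
        (case vb of None \<Rightarrow> True | Some b \<Rightarrow> norm (snd s1) \<le> b)))"

definition ftocp_feasible ::
  "real \<Rightarrow> real \<Rightarrow> real \<Rightarrow> nat \<Rightarrow> nat \<Rightarrow> (nat \<Rightarrow> vec set) \<Rightarrow> (nat \<Rightarrow> state) \<Rightarrow> nat
   \<Rightarrow> nat \<Rightarrow> real option \<Rightarrow> bool" where
  "ftocp_feasible dt abar rho M N S st m Nh vb =
     (\<exists>as. ftocp_constr dt abar rho M N S st m Nh vb as)"

text \<open>J m as ss: cost of agent m for inputs a_0..a_{N-1} and nominal states s_0..s_N.\<close>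
definition ftocp_optimal ::
  "real \<Rightarrow> real \<Rightarrow> real \<Rightarrow> nat \<Rightarrow> nat \<Rightarrow> (nat \<Rightarrow> vec set)
   \<Rightarrow> (nat \<Rightarrow> vec list \<Rightarrow> state list \<Rightarrow> real) \<Rightarrow> (nat \<Rightarrow> state) \<Rightarrow> nat
   \<Rightarrow> nat \<Rightarrow> real option \<Rightarrow> vec list \<Rightarrow> bool" where
  "ftocp_optimal dt abar rho M N S J st m Nh vb as =
     (ftocp_constr dt abar rho M N S st m Nh vb as \<and>
      (\<forall>bs. ftocp_constr dt abar rho M N S st m Nh vb bs \<longrightarrow>
         J m as (map (nom_state dt (st m) as) [0..<Suc N])
           \<le> J m bs (map (nom_state dt (st m) bs) [0..<Suc N])))"

definition valid_sol :: "real \<Rightarrow> real \<Rightarrow> state \<Rightarrow> nat \<Rightarrow> vec list \<Rightarrow> bool" where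
  "valid_sol dt abar s0 Nh as = (\<lceil>norm (snd (nom_state dt s0 as 1)) / (abar * dt)\<rceil> = int Nh)"

text \<open>Stages g = 0,1,2 of the CMC procedure ((a),(b),(c)); Nt = \<tilde>N^(m)_k.\<close>
definition stage_Nh :: "nat \<Rightarrow> nat \<Rightarrow> nat" where
  "stage_Nh Nt g = (if g = 0 then Nt + 1 else if g = 1 then Nt else Nt - 1)"

definition stage_vb :: "real \<Rightarrow> real \<Rightarrow> nat \<Rightarrow> nat \<Rightarrow> real option" where
  "stage_vb abar dt Nt g =
     (if g = 0 then None else if g = 1 then Some (abar * real Nt * dt)
      else Some (abar * real (Nt - 1) * dt))"

text \<open>sol g = the optimal solution returned by the solver for stage g.\<close>
definition cmc_stage_ok ::
  "real \<Rightarrow> real \<Rightarrow> real \<Rightarrow> real \<Rightarrow> nat \<Rightarrow> nat \<Rightarrow> (nat \<Rightarrow> vec set) \<Rightarrow> (nat \<Rightarrow> state)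
   \<Rightarrow> nat \<Rightarrow> (nat \<Rightarrow> vec list) \<Rightarrow> nat \<Rightarrow> bool" where
  "cmc_stage_ok dt abar vbar rho M N S st m sol g =
     (let Nt = nsteps abar dt (snd (st m)); Ntil = nat \<lceil>vbar / (abar * dt)\<rceil> in
      if g = 0 then
        Nt < Ntil \<and> ftocp_feasible dt abar rho M N S st m (stage_Nh Nt 0) (stage_vb abar dt Nt 0)
        \<and> valid_sol dt abar (st m) (stage_Nh Nt 0) (sol 0)
      else if g = 1 then
        ftocp_feasible dt abar rho M N S st m (stage_Nh Nt 1) (stage_vb abar dt Nt 1)
        \<and> valid_sol dt abar (st m) (stage_Nh Nt 1) (sol 1)
      else
        1 \<le> Nt \<and> ftocp_feasible dt abar rho M N S st m (stage_Nh Nt 2) (stage_vb abar dt Nt 2))"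

definition cmc_succeeds ::
  "real \<Rightarrow> real \<Rightarrow> real \<Rightarrow> real \<Rightarrow> nat \<Rightarrow> nat \<Rightarrow> (nat \<Rightarrow> vec set) \<Rightarrow> (nat \<Rightarrow> state)
   \<Rightarrow> nat \<Rightarrow> (nat \<Rightarrow> vec list) \<Rightarrow> bool" where
  "cmc_succeeds dt abar vbar rho M N S st m sol =
     (\<exists>g\<le>2. cmc_stage_ok dt abar vbar rho M N S st m sol g)"

definition cmc_input ::
  "real \<Rightarrow> real \<Rightarrow> real \<Rightarrow> real \<Rightarrow> nat \<Rightarrow> nat \<Rightarrow> (nat \<Rightarrow> vec set) \<Rightarrow> (nat \<Rightarrow> state)
   \<Rightarrow> nat \<Rightarrow> (nat \<Rightarrow> vec list) \<Rightarrow> vec" where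
  "cmc_input dt abar vbar rho M N S st m sol =
     (if cmc_stage_ok dt abar vbar rho M N S st m sol 0 then sol 0 ! 0
      else if cmc_stage_ok dt abar vbar rho M N S st m sol 1 then sol 1 ! 0
      else sol 2 ! 0)"

end

theory Submission
  imports Defs
begin

(* Both the reference plan and the contingency plan are iterates of the braking step
   -v/(n dt). Whichever stage the CMC procedure uses at time k, its horizon Nh is the
   braking horizon of the state reached at time k+1, so the contingency plan accepted at
   time k is the reference plan computed at time k+1, shifted by one step. Hence these new
   reference plans stay in S, and, since the collision-avoidance half-spaces of two agents
   are separated by a slab of width 2 rho around their bisecting plane, they are pairwise
   2 rho apart. At time k+1 each agent may therefore follow its own reference plan with a
   contingency horizon one step shorter: this is feasible for stage (c), or, for an agent at
   rest, for stage (b), whose velocity bound 0 forces a valid solution. Induction on k also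
   carries the bound n <= Ntilde <= N - 1 on the braking horizons. *)

definition brake_step :: "real \<Rightarrow> nat \<Rightarrow> vec \<Rightarrow> state \<Rightarrow> state" where
  "brake_step dt n v x = step dt x (- ((1 / (real n * dt)) *\<^sub>R v))"

lemma snd_step: "snd (step dt x a) = snd x + dt *\<^sub>R a"
  by (simp add: step_def)

lemma step_zero_input: "snd x = 0 \<Longrightarrow> step dt x 0 = x"
  by (cases x) (simp add: step_def)

lemma snd_brake_step:
  assumes "dt > 0"
  shows "snd (brake_step dt n v x) = snd x - (1 / real n) *\<^sub>R v"
  using assms by (simp add: brake_step_def snd_step)

lemma snd_funpow_brake_step:
  assumes "dt > 0" and "j \<le> n"
  shows "snd ((brake_step dt n (snd x) ^^ j) x) = (1 - real j / real n) *\<^sub>R snd x"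
  using assms(2)
proof (induction j)
  case 0
  then show ?case by simp
next
  case (Suc j)
  have "snd ((brake_step dt n (snd x) ^^ Suc j) x)
      = (1 - real j / real n) *\<^sub>R snd x - (1 / real n) *\<^sub>R snd x"
    using Suc assms(1) by (simp add: snd_brake_step)
  also have "\<dots> = (1 - real (Suc j) / real n) *\<^sub>R snd x"
    by (simp add: scaleR_diff_left[symmetric] add_divide_distrib diff_divide_distrib)
  finally show ?case .
qed

lemma brake_step_rescale:
  assumes "dt > 0" and "n \<ge> 2"
  shows "brake_step dt (n - 1) ((1 - 1 / real n) *\<^sub>R v) = brake_step dt n v"
proof -
  have "(1 / (real (n - 1) * dt)) * (1 - 1 / real n) = 1 / (real n * dt)"
    using assms by (simp add: of_nat_diff field_simps)
  then show ?thesis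
    by (simp add: brake_step_def[abs_def])
qed

lemma ceiling_eq_nsteps:
  assumes "dt > 0" and "abar > 0"
  shows "\<lceil>norm v / (abar * dt)\<rceil> = int (nsteps abar dt v)"
proof -
  have "0 \<le> norm v / (abar * dt)"
    using assms by simp
  then show ?thesis
    by (simp add: nsteps_def)
qed

lemma nsteps_zero [simp]: "nsteps abar dt 0 = 0"
  by (simp add: nsteps_def)

lemma nsteps_eq_0_iff:
  assumes "dt > 0" and "abar > 0"
  shows "nsteps abar dt v = 0 \<longleftrightarrow> v = 0"
  using ceiling_eq_nsteps[OF assms, of v] mult_pos_pos[OF assms(2,1)]
  by (auto simp: ceiling_eq_iff divide_le_0_iff)

lemma norm_le_nsteps:
  assumes "dt > 0" and "abar > 0"
  shows "norm v \<le> abar * real (nsteps abar dt v) * dt"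
proof -
  have "norm v / (abar * dt) \<le> real (nsteps abar dt v)"
    using le_of_int_ceiling[of "norm v / (abar * dt)"] ceiling_eq_nsteps[OF assms] by simp
  then show ?thesis
    using assms by (simp add: divide_le_eq mult_ac)
qed

lemma nsteps_le_ceiling:
  assumes "dt > 0" and "abar > 0" and "norm v \<le> w"
  shows "nsteps abar dt v \<le> nat \<lceil>w / (abar * dt)\<rceil>"
  using assms unfolding nsteps_def
  by (intro nat_mono ceiling_mono divide_right_mono) simp_all

lemma nsteps_le_of_norm_le:
  assumes "dt > 0" and "abar > 0" and "norm v \<le> abar * real n * dt"
  shows "nsteps abar dt v \<le> n"
  using nsteps_le_ceiling[OF assms] assms(1,2) by simp

lemma nsteps_le_Suc_nsteps_step:
  assumes "dt > 0" and "abar > 0" and "norm a \<le> abar"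
  shows "nsteps abar dt v \<le> Suc (nsteps abar dt (v + dt *\<^sub>R a))"
proof (rule nsteps_le_of_norm_le[OF assms(1,2)])
  have "norm v \<le> norm (v + dt *\<^sub>R a) + norm (dt *\<^sub>R a)"
    using norm_triangle_ineq4[of "v + dt *\<^sub>R a" "dt *\<^sub>R a"] by simp
  also have "norm (dt *\<^sub>R a) \<le> abar * dt"
    using assms by (simp add: mult.commute mult_left_mono)
  also have "norm (v + dt *\<^sub>R a) \<le> abar * real (nsteps abar dt (v + dt *\<^sub>R a)) * dt"
    by (rule norm_le_nsteps[OF assms(1,2)])
  finally show "norm v \<le> abar * real (Suc (nsteps abar dt (v + dt *\<^sub>R a))) * dt"
    by (simp add: algebra_simps)
qed

lemma valid_sol_iff_nsteps:
  assumes "dt > 0" and "abar > 0"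
  shows "valid_sol dt abar s0 Nh as \<longleftrightarrow> nsteps abar dt (snd (nom_state dt s0 as 1)) = Nh"
  using ceiling_eq_nsteps[OF assms] by (auto simp: valid_sol_def)

lemma ref_state_eq_funpow:
  assumes "dt > 0" and "abar > 0"
  shows "ref_state abar dt s i
    = (brake_step dt (nsteps abar dt (snd s)) (snd s) ^^ min i (nsteps abar dt (snd s))) s"
proof (induction i)
  case 0
  then show ?case by simp
next
  case (Suc i)
  let ?n = "nsteps abar dt (snd s)"
  let ?brake = "brake_step dt ?n (snd s)"
  show ?case
  proof (cases "i < ?n")
    case True
    then show ?thesis
      using Suc by (simp add: ref_input_def brake_step_def min_def)
  next
    case False
    have stopped: "snd ((?brake ^^ ?n) s) = 0"
      using snd_funpow_brake_step[OF assms(1) order.refl, of ?n s] nsteps_eq_0_iff[OF assms]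
      by (cases "?n = 0") simp_all
    have "ref_state abar dt s (Suc i) = step dt ((?brake ^^ ?n) s) 0"
      using Suc False by (simp add: ref_input_def min_def)
    also have "\<dots> = (?brake ^^ ?n) s"
      using stopped by (rule step_zero_input)
    finally show ?thesis
      using False by (simp add: min_def)
  qed
qed

lemma ref_state_min_nsteps:
  assumes "dt > 0" and "abar > 0"
  shows "ref_state abar dt s (min i (nsteps abar dt (snd s))) = ref_state abar dt s i"
  by (simp add: ref_state_eq_funpow[OF assms])

(* The contingency plan is indexed from 1, the reference plan from 0. *)
lemma cont_state_nsteps:
  assumes "dt > 0" and "abar > 0"
  shows "cont_state dt (nsteps abar dt (snd s)) s i = ref_state abar dt s (i - 1)"
  by (simp add: ref_state_eq_funpow[OF assms] cont_state_def brake_step_def[abs_def])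

lemma cont_state_ref_state_tail:
  assumes "dt > 0" and "abar > 0" and "i \<ge> 1"
  shows "cont_state dt (nsteps abar dt (snd s) - 1) (ref_state abar dt s 1) i = ref_state abar dt s i"
proof -
  let ?n = "nsteps abar dt (snd s)"
  let ?brake = "brake_step dt ?n (snd s)"
  have ref: "ref_state abar dt s j = (?brake ^^ min j ?n) s" for j
    by (rule ref_state_eq_funpow[OF assms(1,2)])
  have cont: "cont_state dt Nh s1 j = (brake_step dt Nh (snd s1) ^^ min (j - 1) Nh) s1" for Nh s1 j
    by (simp add: cont_state_def brake_step_def[abs_def])
  consider "?n = 0" | "?n = 1" | "?n \<ge> 2"
    by linarith
  then show ?thesis
  proof cases
    case 1
    then show ?thesis
      by (simp add: ref cont del: ref_state.simps)
  next
    case 2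
    then show ?thesis
      using assms(3) by (simp add: ref cont del: ref_state.simps)
  next
    case 3
    have first: "ref_state abar dt s 1 = ?brake s"
      using 3 by (simp add: ref del: ref_state.simps)
    have "snd (?brake s) = (1 - 1 / real ?n) *\<^sub>R snd s"
      using snd_funpow_brake_step[OF assms(1), of 1 ?n s] 3 by simp
    then have same_brake: "brake_step dt (?n - 1) (snd (?brake s)) = ?brake"
      using brake_step_rescale[OF assms(1) 3] by simp
    have "cont_state dt (?n - 1) (ref_state abar dt s 1) i
        = (?brake ^^ min (i - 1) (?n - 1)) (?brake s)"
      by (simp only: first cont same_brake)
    also have "\<dots> = (?brake ^^ Suc (min (i - 1) (?n - 1))) s"
      by (simp only: funpow_Suc_right comp_def)
    also have "Suc (min (i - 1) (?n - 1)) = min i ?n"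
      using assms(3) 3 by simp
    finally show ?thesis
      by (simp add: ref)
  qed
qed

lemma nom_state_ref_inputs:
  "i \<le> N \<Longrightarrow> nom_state dt s (map (ref_input abar dt s) [0..<N]) i = ref_state abar dt s i"
  by (induction i) auto

lemma norm_ref_input_le:
  assumes "dt > 0" and "abar > 0"
  shows "norm (ref_input abar dt s i) \<le> abar"
proof (cases "i < nsteps abar dt (snd s)")
  case True
  have "norm (ref_input abar dt s i) = norm (snd s) / (real (nsteps abar dt (snd s)) * dt)"
    using True assms by (simp add: ref_input_def)
  also have "\<dots> \<le> abar"
    using norm_le_nsteps[OF assms, of "snd s"] True assms by (simp add: divide_le_eq mult_ac)
  finally show ?thesis .
next
  case False
  then show ?thesis
    using assms by (simp add: ref_input_def)
qed

lemma norm_snd_ref_state_1: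
  assumes "dt > 0" and "abar > 0"
  shows "norm (snd (ref_state abar dt s 1)) \<le> abar * real (nsteps abar dt (snd s) - 1) * dt"
proof (cases "nsteps abar dt (snd s) = 0")
  case True
  then show ?thesis
    using nsteps_eq_0_iff[OF assms] by (simp add: ref_state_eq_funpow[OF assms] del: ref_state.simps)
next
  case False
  let ?n = "nsteps abar dt (snd s)"
  have "snd (ref_state abar dt s 1) = (1 - 1 / real ?n) *\<^sub>R snd s"
    using snd_funpow_brake_step[OF assms(1), of 1 ?n s] False
    by (simp add: ref_state_eq_funpow[OF assms] min_def del: ref_state.simps)
  moreover have "0 \<le> 1 - 1 / real ?n"
    using False by simp
  ultimately have "norm (snd (ref_state abar dt s 1)) = (1 - 1 / real ?n) * norm (snd s)"
    by simp
  also have "\<dots> \<le> (1 - 1 / real ?n) * (abar * real ?n * dt)"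
    using norm_le_nsteps[OF assms] \<open>0 \<le> 1 - 1 / real ?n\<close> by (rule mult_left_mono)
  also have "\<dots> = abar * real (?n - 1) * dt"
    using False by (simp add: of_nat_diff field_simps)
  finally show ?thesis .
qed

(* The two half-spaces lie on either side of the bisecting plane of P and Q, each at
   distance rho from it. *)
lemma ca_ok_separation:
  fixes P Q x y :: vec
  assumes "P \<noteq> Q" and "ca_ok rho P Q x" and "ca_ok rho Q P y"
  shows "2 * rho \<le> norm (x - y)"
proof -
  let ?u = "P - Q"
  let ?d = "norm (P - Q)"
  have d: "?d > 0"
    using assms(1) by simp
  have hx: "(?u \<bullet> x) / ?d \<le> (?u \<bullet> Q) / ?d + ?d / 2 - rho"
    using assms(2) by (simp add: ca_ok_def Let_def)
  have "((Q - P) \<bullet> y) / ?d \<le> ((Q - P) \<bullet> P) / ?d + ?d / 2 - rho"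
    using assms(3) by (simp add: ca_ok_def Let_def norm_minus_commute)
  then have hy: "- (?u \<bullet> y) / ?d \<le> - (?u \<bullet> P) / ?d + ?d / 2 - rho"
    by (simp add: inner_diff_left)
  have "?u \<bullet> P - ?u \<bullet> Q = ?d * ?d"
    by (simp add: inner_diff_right[symmetric] power2_eq_square[symmetric] power2_norm_eq_inner)
  then have "(?u \<bullet> Q - ?u \<bullet> P) / ?d = - ?d"
    using d by (simp add: field_simps)
  moreover have "(?u \<bullet> x - ?u \<bullet> y) / ?d \<le> (?u \<bullet> Q - ?u \<bullet> P) / ?d + ?d - 2 * rho"
    using hx hy by (simp add: diff_divide_distrib)
  ultimately have "2 * rho \<le> (?u \<bullet> (y - x)) / ?d"
    by (simp add: inner_diff_right diff_divide_distrib)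
  also have "\<dots> \<le> norm (y - x)"
    using norm_cauchy_schwarz[of ?u "y - x"] d by (simp add: divide_le_eq mult.commute)
  finally show ?thesis
    by (simp add: norm_minus_commute)
qed

lemma ca_ok_self:
  fixes P Q :: vec
  assumes "2 * rho \<le> norm (P - Q)"
  shows "ca_ok rho P Q Q"
  using assms by (simp add: ca_ok_def Let_def)

definition ref_plans_separated ::
  "real \<Rightarrow> real \<Rightarrow> real \<Rightarrow> nat \<Rightarrow> nat \<Rightarrow> (nat \<Rightarrow> state) \<Rightarrow> nat \<Rightarrow> bool" where
  "ref_plans_separated dt abar rho M N st m \<longleftrightarrow>
     (\<forall>j\<in>{1..M}. j \<noteq> m \<longrightarrow> (\<forall>i\<in>{1..N}.
        2 * rho \<le> norm (ref_pos abar dt (st j) i - ref_pos abar dt (st m) i)))"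

definition collision_constraints_hold ::
  "real \<Rightarrow> real \<Rightarrow> real \<Rightarrow> nat \<Rightarrow> nat \<Rightarrow> (nat \<Rightarrow> state) \<Rightarrow> nat \<Rightarrow> (nat \<Rightarrow> vec) \<Rightarrow> bool" where
  "collision_constraints_hold dt abar rho M N st m q \<longleftrightarrow>
     (\<forall>j\<in>{1..M}. j \<noteq> m \<longrightarrow> (\<forall>i\<in>{1..N}.
        ref_pos abar dt (st j) i \<noteq> ref_pos abar dt (st m) i \<and>
        ca_ok rho (ref_pos abar dt (st j) i) (ref_pos abar dt (st m) i) (q i)))"

lemma ftocp_feasible_ref_plan:
  assumes dt: "dt > 0" and abar: "abar > 0" and N: "N \<ge> 1" and rho: "rho > 0"
    and sep: "ref_plans_separated dt abar rho M N st m"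
    and safe: "\<forall>i. fst (ref_state abar dt (st m) i) \<in> S m"
  shows "ftocp_feasible dt abar rho M N S st m (nsteps abar dt (snd (st m)) - 1)
           (Some (abar * real (nsteps abar dt (snd (st m)) - 1) * dt))"
proof -
  let ?n = "nsteps abar dt (snd (st m))"
  let ?as = "map (ref_input abar dt (st m)) [0..<N]"
  let ?r = "ref_state abar dt (st m)"
  have nom: "nom_state dt (st m) ?as i = ?r i" if "i \<le> N" for i
    using that by (rule nom_state_ref_inputs)
  have cont: "cont_state dt (?n - 1) (?r 1) i = ?r i" if "i \<ge> 1" for i
    using dt abar that by (rule cont_state_ref_state_tail)
  have "ftocp_constr dt abar rho M N S st m (?n - 1) (Some (abar * real (?n - 1) * dt)) ?as"
    unfolding ftocp_constr_def Let_def nom[OF N]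
  proof (intro conjI ballI allI impI)
    fix j i
    assume j: "j \<in> {1..M}" "j \<noteq> m" and i: "i \<in> {1..N}"
    then have far: "2 * rho \<le> norm (ref_pos abar dt (st j) i - ref_pos abar dt (st m) i)"
      using sep by (simp add: ref_plans_separated_def)
    then show "ref_pos abar dt (st j) i \<noteq> ref_pos abar dt (st m) i"
      using rho by auto
    show "ca_ok rho (ref_pos abar dt (st j) i) (ref_pos abar dt (st m) i)
        (fst (cont_state dt (?n - 1) (?r 1) i))"
      using ca_ok_self[OF far] cont i by (simp add: ref_pos_def)
  qed (use nom cont safe norm_ref_input_le[OF dt abar] norm_snd_ref_state_1[OF dt abar] in auto)
  then show ?thesis
    unfolding ftocp_feasible_def by blast
qed

definition feasible_stages_solved ::
  "real \<Rightarrow> real \<Rightarrow> real \<Rightarrow> nat \<Rightarrow> nat \<Rightarrow> (nat \<Rightarrow> vec set) \<Rightarrow> (nat \<Rightarrow> state) \<Rightarrow> nat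
   \<Rightarrow> (nat \<Rightarrow> vec list) \<Rightarrow> bool" where
  "feasible_stages_solved dt abar rho M N S st m sol \<longleftrightarrow>
     (\<forall>g\<le>2. let Nt = nsteps abar dt (snd (st m)) in
        ftocp_feasible dt abar rho M N S st m (stage_Nh Nt g) (stage_vb abar dt Nt g)
        \<longrightarrow> ftocp_constr dt abar rho M N S st m (stage_Nh Nt g) (stage_vb abar dt Nt g) (sol g))"

lemma feasible_stages_solvedD:
  assumes "feasible_stages_solved dt abar rho M N S st m sol" and "g \<le> 2"
    and "ftocp_feasible dt abar rho M N S st m (stage_Nh (nsteps abar dt (snd (st m))) g)
           (stage_vb abar dt (nsteps abar dt (snd (st m))) g)"
  shows "ftocp_constr dt abar rho M N S st m (stage_Nh (nsteps abar dt (snd (st m))) g)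
           (stage_vb abar dt (nsteps abar dt (snd (st m))) g) (sol g)"
  using assms by (simp add: feasible_stages_solved_def Let_def)

lemma cmc_succeeds_ref_plan:
  assumes dt: "dt > 0" and abar: "abar > 0" and N: "N \<ge> 1" and rho: "rho > 0"
    and sep: "ref_plans_separated dt abar rho M N st m"
    and safe: "\<forall>i. fst (ref_state abar dt (st m) i) \<in> S m"
    and solved: "feasible_stages_solved dt abar rho M N S st m sol"
  shows "cmc_succeeds dt abar vbar rho M N S st m sol"
proof (cases "nsteps abar dt (snd (st m)) = 0")
  case False
  then have "cmc_stage_ok dt abar vbar rho M N S st m sol 2"
    using ftocp_feasible_ref_plan[where S = S, OF dt abar N rho sep safe]
    by (simp add: cmc_stage_ok_def stage_Nh_def stage_vb_def)
  then show ?thesis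
    unfolding cmc_succeeds_def by (intro exI[of _ 2]) simp
next
  case True
  let ?Nt = "nsteps abar dt (snd (st m))"
  have feasible: "ftocp_feasible dt abar rho M N S st m (stage_Nh ?Nt 1) (stage_vb abar dt ?Nt 1)"
    using ftocp_feasible_ref_plan[where S = S, OF dt abar N rho sep safe] True
    by (simp add: stage_Nh_def stage_vb_def)
  then have "ftocp_constr dt abar rho M N S st m 0 (Some 0) (sol 1)"
    using feasible_stages_solvedD[OF solved _ feasible] True by (simp add: stage_Nh_def stage_vb_def)
  then have "snd (nom_state dt (st m) (sol 1) 1) = 0"
    by (simp add: ftocp_constr_def Let_def)
  then have "valid_sol dt abar (st m) (stage_Nh ?Nt 1) (sol 1)"
    using True by (simp add: valid_sol_iff_nsteps[OF dt abar] stage_Nh_def)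
  then have "cmc_stage_ok dt abar vbar rho M N S st m sol 1"
    using feasible by (simp add: cmc_stage_ok_def)
  then show ?thesis
    unfolding cmc_succeeds_def by (intro exI[of _ 1]) simp
qed

lemma cmc_input_ok_stage:
  assumes "cmc_succeeds dt abar vbar rho M N S st m sol"
  obtains g where "g \<le> 2" and "cmc_stage_ok dt abar vbar rho M N S st m sol g"
    and "cmc_input dt abar vbar rho M N S st m sol = sol g ! 0"
proof -
  let ?ok = "cmc_stage_ok dt abar vbar rho M N S st m sol"
  obtain g where "g \<le> 2" "?ok g"
    using assms unfolding cmc_succeeds_def by blast
  then have "g = 0 \<or> g = 1 \<or> g = 2"
    by auto
  then consider "?ok 0" | "\<not> ?ok 0" "?ok 1" | "\<not> ?ok 0" "\<not> ?ok 1" "?ok 2"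
    using \<open>?ok g\<close> by blast
  then show ?thesis
  proof cases
    case 1
    then show ?thesis using that[of 0] by (simp add: cmc_input_def)
  next
    case 2
    then show ?thesis using that[of 1] by (simp add: cmc_input_def)
  next
    case 3
    then show ?thesis using that[of 2] by (simp add: cmc_input_def)
  qed
qed

lemma cmc_stage_ok_feasible:
  assumes "cmc_stage_ok dt abar vbar rho M N S st m sol g"
  shows "ftocp_feasible dt abar rho M N S st m (stage_Nh (nsteps abar dt (snd (st m))) g)
           (stage_vb abar dt (nsteps abar dt (snd (st m))) g)"
  using assms by (auto simp: cmc_stage_ok_def Let_def stage_Nh_def stage_vb_def split: if_splits)

lemma nsteps_after_ok_stage:
  assumes dt: "dt > 0" and abar: "abar > 0" and N: "N \<ge> 1"
    and bound: "nsteps abar dt (snd (st m)) \<le> nat \<lceil>vbar / (abar * dt)\<rceil>"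
    and ok: "cmc_stage_ok dt abar vbar rho M N S st m sol g"
    and constr: "ftocp_constr dt abar rho M N S st m (stage_Nh (nsteps abar dt (snd (st m))) g)
      (stage_vb abar dt (nsteps abar dt (snd (st m))) g) (sol g)"
  shows "nsteps abar dt (snd (nom_state dt (st m) (sol g) 1)) = stage_Nh (nsteps abar dt (snd (st m))) g"
    and "stage_Nh (nsteps abar dt (snd (st m))) g \<le> nat \<lceil>vbar / (abar * dt)\<rceil>"
proof -
  let ?Nt = "nsteps abar dt (snd (st m))"
  let ?s1 = "nom_state dt (st m) (sol g) 1"
  have "nsteps abar dt (snd ?s1) = stage_Nh ?Nt g \<and> stage_Nh ?Nt g \<le> nat \<lceil>vbar / (abar * dt)\<rceil>"
  proof (cases "g = 0 \<or> g = 1")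
    case True
    then show ?thesis
      using ok bound by (auto simp: cmc_stage_ok_def Let_def valid_sol_iff_nsteps[OF dt abar] stage_Nh_def)
  next
    case False
    then have Nt: "1 \<le> ?Nt" and vb: "norm (snd ?s1) \<le> abar * real (?Nt - 1) * dt"
      using ok constr by (auto simp: cmc_stage_ok_def ftocp_constr_def Let_def stage_vb_def)
    have "norm (sol g ! 0) \<le> abar"
      using constr N by (simp add: ftocp_constr_def)
    then have "?Nt \<le> Suc (nsteps abar dt (snd ?s1))"
      using nsteps_le_Suc_nsteps_step[OF dt abar] by (simp add: snd_step)
    moreover have "nsteps abar dt (snd ?s1) \<le> ?Nt - 1"
      using dt abar vb by (rule nsteps_le_of_norm_le)
    ultimately have "nsteps abar dt (snd ?s1) = ?Nt - 1"
      by linarith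
    then show ?thesis
      using False bound by (simp add: stage_Nh_def)
  qed
  then show "nsteps abar dt (snd ?s1) = stage_Nh ?Nt g" and "stage_Nh ?Nt g \<le> nat \<lceil>vbar / (abar * dt)\<rceil>"
    by simp_all
qed

lemma ftocp_constr_ref_plan:
  assumes dt: "dt > 0" and abar: "abar > 0" and N: "N \<ge> 1"
    and constr: "ftocp_constr dt abar rho M N S st m (nsteps abar dt (snd s1)) vb as"
    and s1: "s1 = nom_state dt (st m) as 1"
  shows "\<forall>i. fst (ref_state abar dt s1 i) \<in> S m"
    and "collision_constraints_hold dt abar rho M N st m (\<lambda>i. ref_pos abar dt s1 (i - 1))"
proof -
  let ?n = "nsteps abar dt (snd s1)"
  have "\<forall>i\<in>{1..N}. fst (nom_state dt (st m) as i) \<in> S m"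
    and braking: "\<forall>i\<in>{2..?n + 1}. fst (cont_state dt ?n s1 i) \<in> S m"
    and ca: "collision_constraints_hold dt abar rho M N st m (\<lambda>i. fst (cont_state dt ?n s1 i))"
    using constr unfolding ftocp_constr_def collision_constraints_hold_def Let_def s1[symmetric]
    by blast+
  then have nominal: "fst s1 \<in> S m"
    using N s1 by (auto dest: bspec[of _ _ 1])
  show "\<forall>i. fst (ref_state abar dt s1 i) \<in> S m"
  proof
    fix i
    show "fst (ref_state abar dt s1 i) \<in> S m"
    proof (cases "min i ?n = 0")
      case True
      then show ?thesis
        using nominal ref_state_min_nsteps[OF dt abar, of s1 i] by simp
    next
      case False
      then have "fst (cont_state dt ?n s1 (min i ?n + 1)) \<in> S m"
        using braking by simp
      then show ?thesis
        by (simp add: cont_state_nsteps[OF dt abar] ref_state_min_nsteps[OF dt abar])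
    qed
  qed
  show "collision_constraints_hold dt abar rho M N st m (\<lambda>i. ref_pos abar dt s1 (i - 1))"
    using ca by (simp add: cont_state_nsteps[OF dt abar] ref_pos_def)
qed

(* Step i of the new reference plans is step i + 1 of the old contingency plans, capped at N,
   where all plans have already come to rest. *)
lemma ref_plans_separated_next:
  assumes dt: "dt > 0" and abar: "abar > 0"
    and horizon: "\<forall>m\<in>{1..M}. nsteps abar dt (snd (st' m)) \<le> N - 1"
    and ca: "\<forall>m\<in>{1..M}.
      collision_constraints_hold dt abar rho M N st m (\<lambda>i. ref_pos abar dt (st' m) (i - 1))"
    and m: "m \<in> {1..M}"
  shows "ref_plans_separated dt abar rho M N st' m"
  unfolding ref_plans_separated_def
proof (intro ballI impI)
  fix j i
  assume j: "j \<in> {1..M}" "j \<noteq> m" and i: "i \<in> {1..N}"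
  define i' where "i' = min (i + 1) N"
  have i': "i' \<in> {1..N}"
    using i by (auto simp: i'_def)
  have shift: "ref_pos abar dt (st' l) (i' - 1) = ref_pos abar dt (st' l) i" if "l \<in> {1..M}" for l
  proof -
    let ?n = "nsteps abar dt (snd (st' l))"
    have "min (i' - 1) ?n = min i ?n"
      using horizon[rule_format, OF that] i by (auto simp: i'_def min_def)
    then have "ref_state abar dt (st' l) (min (i' - 1) ?n) = ref_state abar dt (st' l) (min i ?n)"
      by (simp only:)
    then show ?thesis
      by (simp only: ref_pos_def ref_state_min_nsteps[OF dt abar])
  qed
  let ?rj = "ref_pos abar dt (st j) i'" and ?rm = "ref_pos abar dt (st m) i'"
  have "?rj \<noteq> ?rm" and "ca_ok rho ?rj ?rm (ref_pos abar dt (st' m) (i' - 1))"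
    and "ca_ok rho ?rm ?rj (ref_pos abar dt (st' j) (i' - 1))"
    using ca[unfolded collision_constraints_hold_def, rule_format, OF m j i']
      ca[unfolded collision_constraints_hold_def, rule_format, OF j(1) m j(2)[symmetric] i']
    by simp_all
  then have "2 * rho \<le> norm (ref_pos abar dt (st' m) (i' - 1) - ref_pos abar dt (st' j) (i' - 1))"
    by (rule ca_ok_separation)
  then show "2 * rho \<le> norm (ref_pos abar dt (st' j) i - ref_pos abar dt (st' m) i)"
    using shift[OF m] shift[OF j(1)] by (simp add: norm_minus_commute)
qed

lemma cmc_next_state_ref_plan:
  assumes dt: "dt > 0" and abar: "abar > 0" and N: "N \<ge> 1"
    and succ: "cmc_succeeds dt abar vbar rho M N S st m sol"
    and bound: "nsteps abar dt (snd (st m)) \<le> nat \<lceil>vbar / (abar * dt)\<rceil>"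
    and solved: "feasible_stages_solved dt abar rho M N S st m sol"
    and next_state: "s' = step dt (st m) (cmc_input dt abar vbar rho M N S st m sol)"
  shows "nsteps abar dt (snd s') \<le> nat \<lceil>vbar / (abar * dt)\<rceil>"
    and "\<forall>i. fst (ref_state abar dt s' i) \<in> S m"
    and "collision_constraints_hold dt abar rho M N st m (\<lambda>i. ref_pos abar dt s' (i - 1))"
proof -
  let ?Nt = "nsteps abar dt (snd (st m))"
  obtain g where g: "g \<le> 2" and ok: "cmc_stage_ok dt abar vbar rho M N S st m sol g"
    and input: "cmc_input dt abar vbar rho M N S st m sol = sol g ! 0"
    using succ by (rule cmc_input_ok_stage)
  have constr: "ftocp_constr dt abar rho M N S st m (stage_Nh ?Nt g) (stage_vb abar dt ?Nt g) (sol g)"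
    using solved g cmc_stage_ok_feasible[OF ok] by (rule feasible_stages_solvedD)
  have s': "s' = nom_state dt (st m) (sol g) 1"
    using next_state input by simp
  have Nh: "nsteps abar dt (snd s') = stage_Nh ?Nt g"
    using nsteps_after_ok_stage(1)[OF dt abar N bound ok constr] s' by simp
  then show "nsteps abar dt (snd s') \<le> nat \<lceil>vbar / (abar * dt)\<rceil>"
    using nsteps_after_ok_stage(2)[OF dt abar N bound ok constr] by simp
  have "ftocp_constr dt abar rho M N S st m (nsteps abar dt (snd s')) (stage_vb abar dt ?Nt g) (sol g)"
    using constr Nh by simp
  from ftocp_constr_ref_plan[OF dt abar N this s']
  show "\<forall>i. fst (ref_state abar dt s' i) \<in> S m"
    and "collision_constraints_hold dt abar rho M N st m (\<lambda>i. ref_pos abar dt s' (i - 1))"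
    by blast+
qed

lemma cmc_recursive_feasibility_step:
  assumes dt: "dt > 0" and abar: "abar > 0" and N: "N \<ge> 1" and rho: "rho > 0"
    and horizon: "nat \<lceil>vbar / (abar * dt)\<rceil> \<le> N - 1"
    and invariant: "\<forall>m\<in>{1..M}. cmc_succeeds dt abar vbar rho M N S st m (sol m)
                \<and> nsteps abar dt (snd (st m)) \<le> nat \<lceil>vbar / (abar * dt)\<rceil>"
    and solved: "\<forall>m\<in>{1..M}. feasible_stages_solved dt abar rho M N S st m (sol m)"
    and solved': "\<forall>m\<in>{1..M}. feasible_stages_solved dt abar rho M N S st' m (sol' m)"
    and next_state: "\<forall>m\<in>{1..M}. cmc_succeeds dt abar vbar rho M N S st m (sol m) \<longrightarrow>
                       st' m = step dt (st m) (cmc_input dt abar vbar rho M N S st m (sol m))"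
  shows "\<forall>m\<in>{1..M}. cmc_succeeds dt abar vbar rho M N S st' m (sol' m)
           \<and> nsteps abar dt (snd (st' m)) \<le> nat \<lceil>vbar / (abar * dt)\<rceil>"
proof
  fix m
  assume m: "m \<in> {1..M}"
  note next_plan = cmc_next_state_ref_plan[OF dt abar N conjunct1[OF invariant[rule_format]]
      conjunct2[OF invariant[rule_format]] solved[rule_format]
      next_state[rule_format, OF _ conjunct1[OF invariant[rule_format]]]]
  have "ref_plans_separated dt abar rho M N st' m"
  proof (rule ref_plans_separated_next[where st = st, OF dt abar _ _ m])
    show "\<forall>l\<in>{1..M}. nsteps abar dt (snd (st' l)) \<le> N - 1"
      using next_plan(1) horizon order_trans by blast
  qed (use next_plan(3) in blast)
  then show "cmc_succeeds dt abar vbar rho M N S st' m (sol' m)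
      \<and> nsteps abar dt (snd (st' m)) \<le> nat \<lceil>vbar / (abar * dt)\<rceil>"
    using cmc_succeeds_ref_plan[OF dt abar N rho _ next_plan(2) solved'[rule_format]] next_plan(1) m
    by blast
qed

theorem theorem1:
  fixes dt abar vbar rho :: real
    and M N :: nat
    and S :: "nat \<Rightarrow> vec set"
    and J :: "nat \<Rightarrow> vec list \<Rightarrow> state list \<Rightarrow> real"
    and s :: "nat \<Rightarrow> nat \<Rightarrow> state"
    and sel :: "nat \<Rightarrow> nat \<Rightarrow> nat \<Rightarrow> vec list"
  assumes "dt > 0" and "abar > 0" and "vbar > 0" and "rho > 0"
    and "M \<ge> 2" and "N \<ge> 1"
    and "nat \<lceil>vbar / (abar * dt)\<rceil> \<le> N - 1"
    and "\<forall>m\<in>{1..M}. norm (snd (s 0 m)) \<le> vbar"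
    and solver: "\<forall>m\<in>{1..M}. \<forall>k g. g \<le> 2 \<longrightarrow>
          (let Nt = nsteps abar dt (snd (s k m)) in
           ftocp_feasible dt abar rho M N S (s k) m (stage_Nh Nt g) (stage_vb abar dt Nt g)
           \<longrightarrow> ftocp_optimal dt abar rho M N S J (s k) m (stage_Nh Nt g) (stage_vb abar dt Nt g)
                 (sel m k g))"
    and closed_loop: "\<forall>k. \<forall>m\<in>{1..M}. cmc_succeeds dt abar vbar rho M N S (s k) m (sel m k) \<longrightarrow>
          s (Suc k) m = step dt (s k m) (cmc_input dt abar vbar rho M N S (s k) m (sel m k))"
    and init: "\<forall>m\<in>{1..M}. cmc_succeeds dt abar vbar rho M N S (s 0) m (sel m 0)"
  shows "\<forall>k. \<forall>m\<in>{1..M}. cmc_succeeds dt abar vbar rho M N S (s k) m (sel m k)"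
proof -
  note dt = assms(1) and abar = assms(2) and rho = assms(4) and N = assms(6) and horizon = assms(7)
  have solved: "\<forall>m\<in>{1..M}. feasible_stages_solved dt abar rho M N S (s k) m (sel m k)" for k
    using solver unfolding feasible_stages_solved_def ftocp_optimal_def by metis
  have "\<forall>m\<in>{1..M}. cmc_succeeds dt abar vbar rho M N S (s k) m (sel m k)
          \<and> nsteps abar dt (snd (s k m)) \<le> nat \<lceil>vbar / (abar * dt)\<rceil>" for k
  proof (induction k)
    case 0
    show ?case
      using init assms(8) nsteps_le_ceiling[OF dt abar] by blast
  next
    case (Suc k)
    then show ?case
      by (rule cmc_recursive_feasibility_step[OF dt abar N rho horizon _ solved solved
            spec[OF closed_loop, of k]])
  qed
  then show ?thesis
    by blast
qed

end
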